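(* Let $p$ be an odd prime and $r$ a positive integer. Then $$ \sum_{k=0}^{(p^r+1)/2}\frac{(4k-1)^3}{256^k(2k-1)^4}\binom{2k}{k}^4\equiv 3p^{4r} \pmod{p^{4r+1}}, \qquad \sum_{k=0}^{p^r-1}\frac{(4k-1)^3}{256^k(2k-1)^4}\binom{2k}{k}^4\equiv 3p^{4r} \pmod{p^{4r+1}}. $$
   Context: Congruences between rational numbers modulo a power of $p$ are understood in the ring of $p$-adic integers (i.e. the difference has $p$-adic valuation at least the exponent indicated). *)

theory Defs
  imports Complex_Main "HOL-Computational_Algebra.Primes"
begin

text \<open>Congruence of rationals modulo p^e in the ring of p-adic integers:
  the difference a - b equals p^e * (u/v) with v not divisible by p,
  i.e. the p-adic valuation of a - b is at least e.\<close>
definition padic_cong :: "rat \<Rightarrow> rat \<Rightarrow> nat \<Rightarrow> nat \<Rightarrow> bool" where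
  "padic_cong a b p e \<longleftrightarrow>
     (\<exists>u v :: int. \<not> int p dvd v \<and> a - b = of_int (int p ^ e) * (of_int u / of_int v))"

definition term3 :: "nat \<Rightarrow> rat" where
  "term3 k = (4 * of_nat k - 1) ^ 3 / (256 ^ k * (2 * of_nat k - 1) ^ 4) * of_nat (2 * k choose k) ^ 4"

end

theory Submission
  imports Defs "HOL-Number_Theory.Number_Theory"
begin

text \<open>The summands telescope: with \<open>F n = (8n\<^sup>2 + 4n - 1) C(2n,n)\<^sup>4 / 256\<^sup>n\<close> one has
  \<open>term3 0 = F 0\<close> and \<open>term3 k = F k - F (k - 1)\<close>, so both sums are values of \<open>F\<close>. For
  \<open>q = p\<^sup>r\<close> and \<open>n = (q + 1)/2\<close> or \<open>n = q - 1\<close>, the central binomial coefficient \<open>C(2n,n)\<close>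
  is \<open>q\<close> times \<open>C(q-1, q div 2)\<close> resp. \<open>C(2q-1, q-1)\<close> times a \<open>p\<close>-adic unit, whence
  \<open>F n = q\<^sup>4 A / D\<close> with integers \<open>A \<equiv> 3\<close> and \<open>D \<equiv> 1 (mod p)\<close>: this uses
  \<open>C(q-1, j) \<equiv> (-1)\<^sup>j\<close> and \<open>C(q+j, j) \<equiv> 1 (mod p)\<close>, both consequences of
  \<open>p | C(q, j)\<close> for \<open>0 < j < q\<close>, together with Fermat's little theorem.\<close>

lemma Suc_times_choose_Suc_double:
  "Suc n * (Suc (2 * n) choose n) = Suc (2 * n) * (2 * n choose n)"
proof -
  have "Suc (2 * n) choose n = Suc (2 * n) choose Suc n"
    by (subst binomial_symmetric) simp_all
  then show ?thesis
    using Suc_times_binomial[of n "2 * n"] by simp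
qed

lemma central_binomial_Suc:
  "Suc n * (2 * Suc n choose Suc n) = 2 * (2 * n + 1) * (2 * n choose n)"
proof -
  have "Suc n * (2 * Suc n choose Suc n) = 2 * Suc n * (Suc (2 * n) choose n)"
    using Suc_times_binomial[of n "Suc (2 * n)"] by simp
  also have "\<dots> = 2 * (2 * n + 1) * (2 * n choose n)"
    using Suc_times_choose_Suc_double[of n] by simp
  finally show ?thesis .
qed

lemma sum_term3_closed_form:
  "(\<Sum>k = 0..n. term3 k) = (8 * of_nat n ^ 2 + 4 * of_nat n - 1) * of_nat (2 * n choose n) ^ 4 / 256 ^ n"
proof (induction n)
  case 0
  then show ?case by (simp add: term3_def)
next
  case (Suc n)
  define x where "x = (of_nat n :: rat)"
  define c where "c = (of_nat (2 * n choose n) :: rat)"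
  define a where "a = (256 :: rat) ^ n"
  have nonzero: "x + 1 \<noteq> 0" "2 * x + 1 \<noteq> 0" "a \<noteq> 0"
    by (simp_all add: x_def a_def add_pos_nonneg flip: of_nat_Suc)
  have "(x + 1) * of_nat (2 * Suc n choose Suc n) = 2 * (2 * x + 1) * c"
    unfolding x_def c_def using arg_cong[OF central_binomial_Suc, of "of_nat :: nat \<Rightarrow> rat"]
    by (simp add: algebra_simps)
  then have C: "of_nat (2 * Suc n choose Suc n) = 2 * (2 * x + 1) * c / (x + 1)"
    using nonzero by (simp add: field_simps)
  have "(\<Sum>k = 0..Suc n. term3 k)
      = (8 * x ^ 2 + 4 * x - 1) * c ^ 4 / a
        + (4 * x + 3) ^ 3 / (256 * a * (2 * x + 1) ^ 4) * (2 * (2 * x + 1) * c / (x + 1)) ^ 4"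
    unfolding sum.atLeast0_atMost_Suc Suc.IH term3_def[of "Suc n"] C
    by (simp add: x_def c_def a_def algebra_simps)
  also have "\<dots> = (8 * (x + 1) ^ 2 + 4 * (x + 1) - 1) * (2 * (2 * x + 1) * c / (x + 1)) ^ 4 / (256 * a)"
    by (simp add: divide_simps nonzero)
      (simp add: algebra_simps power2_eq_square power3_eq_cube power4_eq_xxxx)
  finally show ?case
    unfolding C by (simp add: x_def a_def)
qed

lemma sum_term3_half_odd:
  fixes q :: nat
  assumes "odd q"
  defines "x \<equiv> (of_nat q :: rat)"
  shows "(\<Sum>k = 0..(q + 1) div 2. term3 k)
    = x ^ 4 * ((2 * x ^ 2 + 6 * x + 3) * of_nat (q - 1 choose q div 2) ^ 4 / ((x + 1) ^ 4 * 16 ^ (q - 1)))"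
proof -
  obtain m where q: "q = 2 * m + 1"
    using assms(1) oddE by blast
  define c where "c = (of_nat (q - 1 choose q div 2) :: rat)"
  have "x + 1 \<noteq> 0"
    unfolding x_def by (simp add: add_pos_nonneg flip: of_nat_Suc)
  have "(of_nat m + 1) * of_nat (2 * Suc m choose Suc m) = 2 * x * c"
    using arg_cong[OF central_binomial_Suc[of m], of "of_nat :: nat \<Rightarrow> rat"]
    by (simp add: x_def c_def q algebra_simps del: binomial_Suc_Suc)
  then have B: "of_nat (2 * Suc m choose Suc m) = 4 * x * c / (x + 1)"
    using \<open>x + 1 \<noteq> 0\<close> by (simp add: x_def q field_simps del: binomial_Suc_Suc)
  have P: "8 * of_nat (Suc m) ^ 2 + 4 * of_nat (Suc m) - 1 = 2 * x ^ 2 + 6 * x + (3 :: rat)"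
    by (simp add: x_def q algebra_simps power2_eq_square)
  have N: "(q + 1) div 2 = Suc m"
    by (simp add: q)
  have E: "(256 :: rat) ^ Suc m = 256 * 16 ^ (q - 1)"
    by (simp add: q power_mult flip: power_mult_distrib)
  show ?thesis
    unfolding N sum_term3_closed_form B P E c_def[symmetric] using \<open>x + 1 \<noteq> 0\<close>
    by (simp add: power_divide power_mult_distrib field_simps)
qed

lemma sum_term3_pred:
  fixes q :: nat
  assumes "q > 0"
  defines "x \<equiv> (of_nat q :: rat)"
  shows "(\<Sum>k = 0..q - 1. term3 k)
    = x ^ 4 * ((8 * x ^ 2 - 12 * x + 3) * of_nat (2 * q - 1 choose (q - 1)) ^ 4
               / ((2 * x - 1) ^ 4 * 256 ^ (q - 1)))"
proof -
  obtain n where q: "q = Suc n"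
    using assms(1) gr0_implies_Suc by blast
  have q': "2 * q - 1 = Suc (2 * n)" "q - 1 = n"
    by (simp_all add: q)
  define b where "b = (of_nat (Suc (2 * n) choose n) :: rat)"
  have "2 * x - 1 \<noteq> 0"
    unfolding x_def q by (simp add: algebra_simps add_pos_nonneg)
  have "x * b = (2 * x - 1) * of_nat (2 * n choose n)"
    using arg_cong[OF Suc_times_choose_Suc_double[of n], of "of_nat :: nat \<Rightarrow> rat"]
    by (simp add: x_def b_def q algebra_simps del: binomial_Suc_Suc)
  then have C: "of_nat (2 * n choose n) = x * b / (2 * x - 1)"
    using \<open>2 * x - 1 \<noteq> 0\<close> by (simp add: field_simps)
  have P: "8 * of_nat n ^ 2 + 4 * of_nat n - 1 = 8 * x ^ 2 - 12 * x + (3 :: rat)"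
    by (simp add: x_def q algebra_simps power2_eq_square)
  show ?thesis
    unfolding q' sum_term3_closed_form C P b_def[symmetric] using \<open>2 * x - 1 \<noteq> 0\<close>
    by (simp add: power_divide power_mult_distrib field_simps)
qed

lemma prime_dvd_choose_prime_power:
  fixes p r j :: nat
  assumes "prime p" "0 < j" "j < p ^ r"
  shows "p dvd (p ^ r choose j)"
proof (rule ccontr)
  assume "\<not> p dvd (p ^ r choose j)"
  then have "coprime (p ^ r) (p ^ r choose j)"
    using assms(1) by (simp add: prime_imp_coprime)
  moreover have "p ^ r dvd (p ^ r choose j) * j"
    using times_binomial_minus1_eq[OF assms(2), of "p ^ r"] by (metis dvd_triv_left mult.commute)
  ultimately have "p ^ r dvd j"
    using coprime_dvd_mult_right_iff by blast
  with assms(2,3) show False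
    by (simp add: nat_dvd_not_less)
qed

lemma choose_prime_power_pred_cong:
  fixes p r j :: nat
  assumes "prime p" "j < p ^ r"
  shows "[int (p ^ r - 1 choose j) = (-1) ^ j] (mod int p)"
  using assms(2)
proof (induction j)
  case 0
  then show ?case by simp
next
  case (Suc j)
  have "p ^ r choose Suc j = (p ^ r - 1 choose j) + (p ^ r - 1 choose Suc j)"
    using Suc.prems by (metis Suc_diff_1 binomial_Suc_Suc gr_implies_not0 not_gr0)
  then have "int (p ^ r - 1 choose Suc j) = int (p ^ r choose Suc j) - int (p ^ r - 1 choose j)"
    by simp
  also have "[\<dots> = 0 - (-1) ^ j] (mod int p)"
  proof (rule cong_diff)
    show "[int (p ^ r choose Suc j) = 0] (mod int p)"
      using prime_dvd_choose_prime_power[OF assms(1) _ Suc.prems]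
      by (simp add: cong_0_iff)
    show "[int (p ^ r - 1 choose j) = (-1) ^ j] (mod int p)"
      using Suc by simp
  qed
  finally show ?case by simp
qed

lemma choose_prime_power_add_cong:
  fixes p r j :: nat
  assumes "prime p" "j < p ^ r"
  shows "[p ^ r + j choose j = 1] (mod p)"
proof -
  have "p ^ r + j choose j = (\<Sum>i\<le>j. (p ^ r choose i) * (j choose (j - i)))"
    by (simp add: vandermonde)
  also have "[\<dots> = (\<Sum>i\<le>j. if i = 0 then 1 else 0)] (mod p)"
  proof (rule cong_sum)
    fix i assume "i \<in> {..j}"
    then have "0 < i \<Longrightarrow> p dvd (p ^ r choose i)"
      using prime_dvd_choose_prime_power[OF assms(1)] assms(2) by simp
    then show "[(p ^ r choose i) * (j choose (j - i)) = (if i = 0 then 1 else 0)] (mod p)"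
      by (auto simp: cong_0_iff)
  qed
  finally show ?thesis by simp
qed

lemma fermat_theorem_prime_power:
  fixes p a r :: nat
  assumes "prime p" "\<not> p dvd a"
  shows "[a ^ (p ^ r - 1) = 1] (mod p)"
proof (induction r)
  case 0
  then show ?case by simp
next
  case (Suc r)
  have "p ^ Suc r - 1 = (p ^ r - 1) * p + (p - 1)"
    using assms(1) prime_gt_0_nat[OF assms(1)] by (simp add: algebra_simps diff_mult_distrib Suc_leI)
  then have "a ^ (p ^ Suc r - 1) = (a ^ (p ^ r - 1)) ^ p * a ^ (p - 1)"
    by (simp add: power_add power_mult)
  also have "[\<dots> = 1 ^ p * 1] (mod p)"
    by (intro cong_mult cong_pow Suc fermat_theorem assms)
  finally show ?case by simp
qed

lemma odd_prime_not_dvd_two_power: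
  fixes p k :: nat
  assumes "prime p" "odd p"
  shows "\<not> p dvd 2 ^ k"
proof
  assume "p dvd 2 ^ k"
  then have "p dvd 2"
    using assms(1) prime_dvd_power by blast
  then have "p = 2"
    using assms(1) primes_dvd_imp_eq two_is_prime_nat by blast
  with assms(2) show False
    by simp
qed

lemma padic_cong_pow_mult_frac:
  fixes p e :: nat and A D c :: int
  assumes "p \<noteq> 1" "[A = c] (mod int p)" "[D = 1] (mod int p)"
  shows "padic_cong (of_nat p ^ e * (of_int A / of_int D)) (of_int c * of_nat p ^ e) p (e + 1)"
proof -
  have "\<not> int p dvd D"
    using cong_dvd_iff[OF assms(3)] assms(1) by simp
  have "[c * D = c * 1] (mod int p)"
    using assms(3) by (rule cong_mult[OF cong_refl])
  with assms(2) have "[A = c * D] (mod int p)"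
    by (metis cong_sym cong_trans mult_1_right)
  then obtain u where u: "A - c * D = int p * u"
    by (metis cong_iff_dvd_diff dvd_def)
  have "D \<noteq> 0"
    using \<open>\<not> int p dvd D\<close> by auto
  then have "of_nat p ^ e * (of_int A / of_int D) - of_int c * of_nat p ^ e
      = of_nat p ^ e * (of_int (A - c * D) / (of_int D :: rat))"
    by (simp add: field_simps)
  also have "\<dots> = of_int (int p ^ (e + 1)) * (of_int u / of_int D)"
    by (simp add: u)
  finally show ?thesis
    unfolding padic_cong_def using \<open>\<not> int p dvd D\<close> by blast
qed

lemma sum_term3_half_prime_power_cong:
  fixes p r :: nat
  assumes "prime p" "odd p" "r > 0"
  shows "padic_cong (\<Sum>k = 0..(p ^ r + 1) div 2. term3 k) (3 * of_nat p ^ (4 * r)) p (4 * r + 1)"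
proof -
  define q where "q = p ^ r"
  define A where "A = (2 * int q ^ 2 + 6 * int q + 3) * int (q - 1 choose q div 2) ^ 4"
  define D where "D = (int q + 1) ^ 4 * 16 ^ (q - 1)"
  have q: "[int q = 0] (mod int p)"
    using assms(3) by (simp add: q_def cong_0_iff)
  have "[int (q - 1 choose q div 2) = (-1) ^ (q div 2)] (mod int p)"
    unfolding q_def using assms(1) by (intro choose_prime_power_pred_cong) (simp_all add: prime_gt_0_nat)
  from cong_pow[OF this, of 4] have c: "[int (q - 1 choose q div 2) ^ 4 = 1] (mod int p)"
    by (simp flip: power_mult)
  have fermat: "[(16 :: int) ^ (q - 1) = 1] (mod int p)"
    using fermat_theorem_prime_power[OF assms(1) odd_prime_not_dvd_two_power[OF assms(1,2), of 4], of r]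
    by (simp add: q_def flip: cong_int_iff)
  have "[A = (2 * 0 ^ 2 + 6 * 0 + 3) * 1] (mod int p)"
    unfolding A_def by (intro cong_mult cong_add cong_pow q c cong_refl)
  moreover have "[D = (0 + 1) ^ 4 * 1] (mod int p)"
    unfolding D_def by (intro cong_mult cong_add cong_pow q fermat cong_refl)
  moreover have "(\<Sum>k = 0..(p ^ r + 1) div 2. term3 k) = of_nat p ^ (4 * r) * (of_int A / of_int D)"
    using sum_term3_half_odd[of q] assms(2) by (simp add: A_def D_def q_def power_mult mult.commute)
  ultimately show ?thesis
    using padic_cong_pow_mult_frac[of p A 3 D "4 * r"] prime_gt_1_nat[OF assms(1)] by simp
qed

lemma sum_term3_pred_prime_power_cong:
  fixes p r :: nat
  assumes "prime p" "odd p" "r > 0"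
  shows "padic_cong (\<Sum>k = 0..p ^ r - 1. term3 k) (3 * of_nat p ^ (4 * r)) p (4 * r + 1)"
proof -
  define q where "q = p ^ r"
  define A where "A = (8 * int q ^ 2 - 12 * int q + 3) * int (2 * q - 1 choose (q - 1)) ^ 4"
  define D where "D = (2 * int q - 1) ^ 4 * 256 ^ (q - 1)"
  have "q > 0"
    using assms(1) by (simp add: q_def prime_gt_0_nat)
  have q: "[int q = 0] (mod int p)"
    using assms(3) by (simp add: q_def cong_0_iff)
  have "[q + (q - 1) choose (q - 1) = 1] (mod p)"
    unfolding q_def using assms(1) by (intro choose_prime_power_add_cong) (simp_all add: prime_gt_0_nat)
  moreover have "2 * q - 1 = q + (q - 1)"
    using \<open>q > 0\<close> by simp
  ultimately have b: "[int (2 * q - 1 choose (q - 1)) = 1] (mod int p)"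
    by (simp flip: cong_int_iff)
  have fermat: "[(256 :: int) ^ (q - 1) = 1] (mod int p)"
    using fermat_theorem_prime_power[OF assms(1) odd_prime_not_dvd_two_power[OF assms(1,2), of 8], of r]
    by (simp add: q_def flip: cong_int_iff)
  have "[A = (8 * 0 ^ 2 - 12 * 0 + 3) * 1 ^ 4] (mod int p)"
    unfolding A_def by (intro cong_mult cong_add cong_diff cong_pow q b cong_refl)
  moreover have "[D = (2 * 0 - 1) ^ 4 * 1] (mod int p)"
    unfolding D_def by (intro cong_mult cong_diff cong_pow q fermat cong_refl)
  moreover have "(\<Sum>k = 0..p ^ r - 1. term3 k) = of_nat p ^ (4 * r) * (of_int A / of_int D)"
    using sum_term3_pred[OF \<open>q > 0\<close>] by (simp add: A_def D_def q_def power_mult mult.commute)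
  ultimately show ?thesis
    using padic_cong_pow_mult_frac[of p A 3 D "4 * r"] prime_gt_1_nat[OF assms(1)] by simp
qed

theorem mainTheorem3:
  fixes p r :: nat
  assumes "prime p" and "odd p" and "r > 0"
  shows "padic_cong (\<Sum>k = 0..(p ^ r + 1) div 2. term3 k) (3 * of_nat p ^ (4 * r)) p (4 * r + 1)
       \<and> padic_cong (\<Sum>k = 0..p ^ r - 1. term3 k) (3 * of_nat p ^ (4 * r)) p (4 * r + 1)"
  using sum_term3_half_prime_power_cong[OF assms] sum_term3_pred_prime_power_cong[OF assms] ..

end
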